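(* Let $\mathbf{I}$ be a $d$-system of ideals in a ring $R$ and $A:=\mathscr{A}(R,\mathbf{I})$. Then (i) $Ae_dA\cong(Ae_d)^{\oplus d}$ as left $A$-modules; (ii) $e_dAe_d\cong R/I_{d,d+1}$ as rings; (iii) if $d\ge2$, then $A/(Ae_dA)\cong\mathscr{A}(R,\mathbf{I}')$ as rings, where $\mathbf{I}':=\{I_{ij}\mid1\le i,j\le d\}$ (which is a $(d-1)$-system of ideals in $R$).
   Context: A $d$-system of ideals in $R$ is a collection $\{I_{ij}\mid1\le i,j\le d+1\}$ of two-sided ideals with $I_{ij}I_{jk}\subset I_{ik}$ and $I_{ij}=R$ for $i\ge j$. $\mathscr{A}(R,\mathbf{I}):=\bigoplus_{1\le i,j\le d}I_{ij}/I_{i,d+1}$ with multiplication $(x+I_{i,d+1})(y+I_{k,d+1})=\delta_{jk}(xy+I_{i,d+1})\in I_{il}/I_{i,d+1}$ for $x\in I_{ij},y\in I_{kl}$. Put $e_k:=1+I_{k,d+1}\in I_{kk}/I_{k,d+1}$ for $1\le k\le d$. *)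

theory Defs
  imports "HOL-Algebra.QuotRing" "HOL-Algebra.Ideal_Product"
begin

definition d_system :: "('a, 'b) ring_scheme \<Rightarrow> nat \<Rightarrow> (nat \<Rightarrow> nat \<Rightarrow> 'a set) \<Rightarrow> bool" where
  "d_system R d I \<longleftrightarrow>
     (\<forall>i\<in>{1..d+1}. \<forall>j\<in>{1..d+1}. ideal (I i j) R) \<and>
     (\<forall>i\<in>{1..d+1}. \<forall>j\<in>{1..d+1}. \<forall>k\<in>{1..d+1}. ideal_prod R (I i j) (I j k) \<subseteq> I i k) \<and>
     (\<forall>i\<in>{1..d+1}. \<forall>j\<in>{1..d+1}. j \<le> i \<longrightarrow> I i j = carrier R)"

definition coset_rep :: "'a set \<Rightarrow> 'a" where
  "coset_rep C = (SOME x. x \<in> C)"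

text \<open>The algebra A(R, I) = direct sum over 1 \<le> i, j \<le> d of I_ij / I_{i,d+1}.
  An element is a d\<times>d matrix whose (i,j) entry is a coset I_{i,d+1} +> x with x \<in> I_ij;
  entries outside the index range are fixed to {} (so that elements are determined by their entries).
  Multiplication: (x + I_{i,d+1})(y + I_{k,d+1}) = \<delta>_jk (xy + I_{i,d+1}), extended bilinearly,
  i.e. matrix multiplication computed on representatives.\<close>
definition tiled_carrier :: "('a, 'b) ring_scheme \<Rightarrow> nat \<Rightarrow> (nat \<Rightarrow> nat \<Rightarrow> 'a set) \<Rightarrow> (nat \<Rightarrow> nat \<Rightarrow> 'a set) set" where
  "tiled_carrier R d I = {M. (\<forall>i\<in>{1..d}. \<forall>j\<in>{1..d}. \<exists>x\<in>I i j. M i j = I i (d+1) +>\<^bsub>R\<^esub> x) \<and>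
                   (\<forall>i j. \<not> (i \<in> {1..d} \<and> j \<in> {1..d}) \<longrightarrow> M i j = {})}"

definition tiled_mult :: "('a, 'b) ring_scheme \<Rightarrow> nat \<Rightarrow> (nat \<Rightarrow> nat \<Rightarrow> 'a set) \<Rightarrow> (nat \<Rightarrow> nat \<Rightarrow> 'a set) \<Rightarrow> (nat \<Rightarrow> nat \<Rightarrow> 'a set) \<Rightarrow> (nat \<Rightarrow> nat \<Rightarrow> 'a set)" where
  "tiled_mult R d I M N = (\<lambda>i l. if i \<in> {1..d} \<and> l \<in> {1..d}
      then I i (d+1) +>\<^bsub>R\<^esub> (finsum R (\<lambda>j. coset_rep (M i j) \<otimes>\<^bsub>R\<^esub> coset_rep (N j l)) {1..d})
      else {})"

definition tiled_add :: "('a, 'b) ring_scheme \<Rightarrow> nat \<Rightarrow> (nat \<Rightarrow> nat \<Rightarrow> 'a set) \<Rightarrow> (nat \<Rightarrow> nat \<Rightarrow> 'a set) \<Rightarrow> (nat \<Rightarrow> nat \<Rightarrow> 'a set)" where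
  "tiled_add R d M N = (\<lambda>i j. if i \<in> {1..d} \<and> j \<in> {1..d} then M i j <+>\<^bsub>R\<^esub> N i j else {})"

definition tiled_diag :: "('a, 'b) ring_scheme \<Rightarrow> nat \<Rightarrow> (nat \<Rightarrow> nat \<Rightarrow> 'a set) \<Rightarrow> (nat \<Rightarrow> nat \<Rightarrow> bool) \<Rightarrow> (nat \<Rightarrow> nat \<Rightarrow> 'a set)" where
  "tiled_diag R d I P = (\<lambda>i j. if i \<in> {1..d} \<and> j \<in> {1..d}
      then I i (d+1) +>\<^bsub>R\<^esub> (if P i j then \<one>\<^bsub>R\<^esub> else \<zero>\<^bsub>R\<^esub>) else {})"

definition tiled_alg :: "('a, 'b) ring_scheme \<Rightarrow> nat \<Rightarrow> (nat \<Rightarrow> nat \<Rightarrow> 'a set) \<Rightarrow> (nat \<Rightarrow> nat \<Rightarrow> 'a set) ring" where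
  "tiled_alg R d I =
    \<lparr>carrier = tiled_carrier R d I, mult = tiled_mult R d I,
     one = tiled_diag R d I (\<lambda>i j. i = j), zero = tiled_diag R d I (\<lambda>i j. False),
     add = tiled_add R d\<rparr>"

definition tiled_idem :: "('a, 'b) ring_scheme \<Rightarrow> nat \<Rightarrow> (nat \<Rightarrow> nat \<Rightarrow> 'a set) \<Rightarrow> nat \<Rightarrow> (nat \<Rightarrow> nat \<Rightarrow> 'a set)" where
  "tiled_idem R d I k = tiled_diag R d I (\<lambda>i j. i = k \<and> j = k)"

definition corner_ring :: "('c, 'd) ring_scheme \<Rightarrow> 'c \<Rightarrow> 'c ring" where
  "corner_ring A e = \<lparr>carrier = {e \<otimes>\<^bsub>A\<^esub> a \<otimes>\<^bsub>A\<^esub> e | a. a \<in> carrier A},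
     mult = mult A, one = e, zero = zero A, add = add A\<rparr>"

definition left_module_iso ::
  "('c, 'd) ring_scheme \<Rightarrow> 'm set \<Rightarrow> ('m \<Rightarrow> 'm \<Rightarrow> 'm) \<Rightarrow> ('c \<Rightarrow> 'm \<Rightarrow> 'm)
     \<Rightarrow> 'n set \<Rightarrow> ('n \<Rightarrow> 'n \<Rightarrow> 'n) \<Rightarrow> ('c \<Rightarrow> 'n \<Rightarrow> 'n) \<Rightarrow> ('m \<Rightarrow> 'n) \<Rightarrow> bool" where
  "left_module_iso A M addM smM N addN smN f \<longleftrightarrow>
     bij_betw f M N \<and>
     (\<forall>x\<in>M. \<forall>y\<in>M. f (addM x y) = addN (f x) (f y)) \<and>
     (\<forall>a\<in>carrier A. \<forall>x\<in>M. f (smM a x) = smN a (f x))"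

definition dsum_power_carrier :: "'c set \<Rightarrow> nat \<Rightarrow> (nat \<Rightarrow> 'c) set" where
  "dsum_power_carrier L d = PiE {1..d} (\<lambda>_. L)"

end

theory Submission
  imports Defs
begin

text \<open>Right multiplication by e_d keeps only the d-th column, so
  A e_d consists of the columns with entries x_i \<in> I_id. Moving each column of a matrix into
  position d identifies the matrices with all entries in I_id with (A e_d)^d, and these matrices
  form the two-sided ideal generated by e_d. The corner e_d A e_d is the single entry
  I_dd / I_{d,d+1} = R / I_{d,d+1}. Finally, truncating to the upper left (d-1) \<times> (d-1) block,
  with entries now read modulo I_id \<supseteq> I_{i,d+1}, is a surjective ring homomorphism onto
  A(R, I') whose kernel is again that ideal.\<close>

section \<open>Matrices over a ring\<close>

context ring begin

lemma rcos_eq_iff_minus: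
  assumes "ideal H R" and "a \<in> carrier R" and "b \<in> carrier R"
  shows "H +> a = H +> b \<longleftrightarrow> a \<ominus> b \<in> H"
proof -
  interpret H: ideal H R by fact
  have "H +> a = H +> b \<longleftrightarrow> a \<in> H +> b"
    using assms H.a_rcos_self H.a_repr_independence' by auto
  also have "\<dots> \<longleftrightarrow> a \<ominus> b \<in> H"
    using H.a_rcos_module_minus[OF ring_axioms] assms by simp
  finally show ?thesis .
qed

lemma rcos_add_ideal_elem:
  assumes "ideal H R" and "h \<in> H" and "x \<in> carrier R"
  shows "H +> (h \<oplus> x) = H +> x"
proof -
  interpret H: ideal H R by fact
  have "h \<oplus> x \<in> H +> x" using assms(2) unfolding a_r_coset_def' by blast
  thus ?thesis using H.a_repr_independence' assms(3) by simp
qed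

lemma coset_rep_rcos:
  assumes "ideal H R" and "x \<in> carrier R"
  obtains h where "h \<in> H" and "coset_rep (H +> x) = h \<oplus> x"
proof -
  interpret H: ideal H R by fact
  have "x \<in> H +> x" using assms(2) H.a_rcos_self by simp
  hence "coset_rep (H +> x) \<in> H +> x" unfolding coset_rep_def by (rule someI)
  thus ?thesis using that unfolding a_r_coset_def' by blast
qed

lemma finsum_in_ideal:
  assumes "ideal H R" and "finite S" and "\<And>j. j \<in> S \<Longrightarrow> c j \<in> H"
  shows "finsum R c S \<in> H"
  using assms(2,3)
proof (induct S rule: finite_induct)
  case empty
  then show ?case using assms(1) by (simp add: additive_subgroup.zero_closed ideal.axioms(1))
next
  case (insert x F)
  interpret H: ideal H R by fact
  have "c \<in> F \<rightarrow> carrier R" "c x \<in> carrier R" using insert H.a_Hcarr by auto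
  then show ?case using insert by (simp add: finsum_insert H.a_closed)
qed

lemma finsum_swap:
  assumes "finite S" and "finite T" and "\<And>i j. i \<in> S \<Longrightarrow> j \<in> T \<Longrightarrow> f i j \<in> carrier R"
  shows "(\<Oplus>i\<in>S. \<Oplus>j\<in>T. f i j) = (\<Oplus>j\<in>T. \<Oplus>i\<in>S. f i j)"
  using assms(1,3)
proof (induct S rule: finite_induct)
  case empty
  then show ?case by (simp add: finsum_zero)
next
  case (insert x F)
  have "(\<Oplus>i\<in>insert x F. \<Oplus>j\<in>T. f i j) = (\<Oplus>j\<in>T. f x j) \<oplus> (\<Oplus>i\<in>F. \<Oplus>j\<in>T. f i j)"
    using insert by (subst finsum_insert) (auto intro: finsum_closed)
  also have "\<dots> = (\<Oplus>j\<in>T. f x j) \<oplus> (\<Oplus>j\<in>T. \<Oplus>i\<in>F. f i j)" using insert by simp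
  also have "\<dots> = (\<Oplus>j\<in>T. f x j \<oplus> (\<Oplus>i\<in>F. f i j))"
    using insert assms(2) by (subst finsum_addf) (auto intro: finsum_closed)
  also have "\<dots> = (\<Oplus>j\<in>T. \<Oplus>i\<in>insert x F. f i j)"
    using insert by (intro finsum_cong') (auto simp: finsum_insert)
  finally show ?case .
qed

lemma finsum_eq_single:
  assumes "finite S" and "k \<in> S" and "\<And>j. j \<in> S \<Longrightarrow> t j \<in> carrier R"
    and "\<And>j. j \<in> S \<Longrightarrow> j \<noteq> k \<Longrightarrow> t j = \<zero>"
  shows "finsum R t S = t k"
proof -
  have "finsum R t S = (\<Oplus>j\<in>S. if k = j then t j else \<zero>)"
    using assms by (intro finsum_cong') auto
  also have "\<dots> = t k" using assms by (intro finsum_singleton) auto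
  finally show ?thesis .
qed

definition mat_mult :: "nat \<Rightarrow> (nat \<Rightarrow> nat \<Rightarrow> 'a) \<Rightarrow> (nat \<Rightarrow> nat \<Rightarrow> 'a) \<Rightarrow> nat \<Rightarrow> nat \<Rightarrow> 'a" where
  "mat_mult d f g = (\<lambda>i l. \<Oplus>j\<in>{1..d}. f i j \<otimes> g j l)"

definition single_entry :: "nat \<Rightarrow> nat \<Rightarrow> 'a \<Rightarrow> nat \<Rightarrow> nat \<Rightarrow> 'a" where
  "single_entry a b x = (\<lambda>i j. if i = a \<and> j = b then x else \<zero>)"

abbreviation mat_carrier :: "nat \<Rightarrow> (nat \<Rightarrow> nat \<Rightarrow> 'a) \<Rightarrow> bool" where
  "mat_carrier d f \<equiv> \<forall>i\<in>{1..d}. \<forall>j\<in>{1..d}. f i j \<in> carrier R"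

lemma mat_mult_closed:
  "mat_carrier d f \<Longrightarrow> mat_carrier d g \<Longrightarrow> mat_carrier d (mat_mult d f g)"
  unfolding mat_mult_def by (auto intro!: finsum_closed)

lemma mat_mult_assoc:
  assumes "mat_carrier d f" "mat_carrier d g" "mat_carrier d h" "i \<in> {1..d}" "m \<in> {1..d}"
  shows "mat_mult d (mat_mult d f g) h i m = mat_mult d f (mat_mult d g h) i m"
proof -
  have "mat_mult d (mat_mult d f g) h i m = (\<Oplus>l\<in>{1..d}. \<Oplus>j\<in>{1..d}. f i j \<otimes> g j l \<otimes> h l m)"
    unfolding mat_mult_def using assms
    by (intro finsum_cong') (auto simp: finsum_ldistr intro!: finsum_closed)
  also have "\<dots> = (\<Oplus>j\<in>{1..d}. \<Oplus>l\<in>{1..d}. f i j \<otimes> g j l \<otimes> h l m)"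
    using assms by (intro finsum_swap) auto
  also have "\<dots> = (\<Oplus>j\<in>{1..d}. \<Oplus>l\<in>{1..d}. f i j \<otimes> (g j l \<otimes> h l m))"
    using assms by (intro finsum_cong') (auto simp: m_assoc intro!: finsum_closed)
  also have "\<dots> = mat_mult d f (mat_mult d g h) i m"
    unfolding mat_mult_def using assms
    by (intro finsum_cong') (auto simp: finsum_rdistr intro!: finsum_closed)
  finally show ?thesis .
qed

lemma mat_mult_l_distr:
  assumes "mat_carrier d f" "mat_carrier d g" "mat_carrier d h" "i \<in> {1..d}" "l \<in> {1..d}"
  shows "mat_mult d (\<lambda>i j. f i j \<oplus> g i j) h i l = mat_mult d f h i l \<oplus> mat_mult d g h i l"
proof -
  have "mat_mult d (\<lambda>i j. f i j \<oplus> g i j) h i l = (\<Oplus>j\<in>{1..d}. f i j \<otimes> h j l \<oplus> g i j \<otimes> h j l)"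
    unfolding mat_mult_def using assms by (intro finsum_cong') (auto simp: l_distr)
  also have "\<dots> = mat_mult d f h i l \<oplus> mat_mult d g h i l"
    unfolding mat_mult_def using assms by (intro finsum_addf) auto
  finally show ?thesis .
qed

lemma mat_mult_r_distr:
  assumes "mat_carrier d f" "mat_carrier d g" "mat_carrier d h" "i \<in> {1..d}" "l \<in> {1..d}"
  shows "mat_mult d h (\<lambda>i j. f i j \<oplus> g i j) i l = mat_mult d h f i l \<oplus> mat_mult d h g i l"
proof -
  have "mat_mult d h (\<lambda>i j. f i j \<oplus> g i j) i l = (\<Oplus>j\<in>{1..d}. h i j \<otimes> f j l \<oplus> h i j \<otimes> g j l)"
    unfolding mat_mult_def using assms by (intro finsum_cong') (auto simp: r_distr)
  also have "\<dots> = mat_mult d h f i l \<oplus> mat_mult d h g i l"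
    unfolding mat_mult_def using assms by (intro finsum_addf) auto
  finally show ?thesis .
qed

lemma mat_mult_l_one:
  assumes "mat_carrier d f" "i \<in> {1..d}" "l \<in> {1..d}"
  shows "mat_mult d (\<lambda>i j. if i = j then \<one> else \<zero>) f i l = f i l"
  unfolding mat_mult_def using assms by (subst finsum_eq_single[of _ i]) auto

lemma mat_mult_r_one:
  assumes "mat_carrier d f" "i \<in> {1..d}" "l \<in> {1..d}"
  shows "mat_mult d f (\<lambda>i j. if i = j then \<one> else \<zero>) i l = f i l"
  unfolding mat_mult_def using assms by (subst finsum_eq_single[of _ l]) auto

lemma mat_mult_Suc_minus:
  assumes "mat_carrier (Suc n) f" "mat_carrier (Suc n) g" "i \<in> {1..Suc n}" "l \<in> {1..Suc n}"
  shows "mat_mult (Suc n) f g i l \<ominus> mat_mult n f g i l = f i (Suc n) \<otimes> g (Suc n) l"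
proof -
  have split: "{1..Suc n} = insert (Suc n) {1..n}" by auto
  have "mat_mult (Suc n) f g i l = f i (Suc n) \<otimes> g (Suc n) l \<oplus> mat_mult n f g i l"
    unfolding mat_mult_def split using assms by (subst finsum_insert) auto
  moreover have "mat_mult n f g i l \<in> carrier R"
    unfolding mat_mult_def using assms by (intro finsum_closed) auto
  ultimately show ?thesis using assms by (simp add: minus_eq a_assoc r_neg)
qed

end

section \<open>The algebra A(R, I)\<close>

definition tiled_of :: "('a, 'b) ring_scheme \<Rightarrow> nat \<Rightarrow> (nat \<Rightarrow> nat \<Rightarrow> 'a set) \<Rightarrow> (nat \<Rightarrow> nat \<Rightarrow> 'a)
    \<Rightarrow> (nat \<Rightarrow> nat \<Rightarrow> 'a set)" where
  "tiled_of R d I f = (\<lambda>i j. if i \<in> {1..d} \<and> j \<in> {1..d} then I i (d+1) +>\<^bsub>R\<^esub> f i j else {})"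

lemma d_system_Suc_imp_d_system:
  assumes "d_system R (Suc n) I" shows "d_system R n I"
proof -
  have "{1..n+1} \<subseteq> {1..Suc n+1}" by auto
  thus ?thesis using assms unfolding d_system_def by (meson subsetD)
qed

locale d_system_ring = ring +
  fixes d :: nat and I :: "nat \<Rightarrow> nat \<Rightarrow> 'a set"
  assumes d_system: "d_system R d I"
begin

abbreviation "tile \<equiv> tiled_of R d I"
abbreviation "A \<equiv> tiled_alg R d I"

lemma ideal_I: "i \<in> {1..d+1} \<Longrightarrow> j \<in> {1..d+1} \<Longrightarrow> ideal (I i j) R"
  using d_system unfolding d_system_def by blast

lemma I_full: "i \<in> {1..d+1} \<Longrightarrow> j \<in> {1..d+1} \<Longrightarrow> j \<le> i \<Longrightarrow> I i j = carrier R"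
  using d_system unfolding d_system_def by blast

lemma I_mult_closed:
  assumes "i \<in> {1..d+1}" "j \<in> {1..d+1}" "k \<in> {1..d+1}" "x \<in> I i j" "y \<in> I j k"
  shows "x \<otimes> y \<in> I i k"
proof -
  have "ideal_prod R (I i j) (I j k) \<subseteq> I i k"
    using d_system assms(1-3) unfolding d_system_def by blast
  moreover have "x \<otimes> y \<in> ideal_prod R (I i j) (I j k)" using assms(4,5) by (rule ideal_prod.prod)
  ultimately show ?thesis by (rule subsetD)
qed

lemma I_carrier: "i \<in> {1..d+1} \<Longrightarrow> j \<in> {1..d+1} \<Longrightarrow> x \<in> I i j \<Longrightarrow> x \<in> carrier R"
  by (rule ideal.Icarr[OF ideal_I])

lemma I_zero: "i \<in> {1..d+1} \<Longrightarrow> j \<in> {1..d+1} \<Longrightarrow> \<zero> \<in> I i j"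
  by (rule additive_subgroup.zero_closed[OF ideal.axioms(1)[OF ideal_I]])

lemma I_add: "i \<in> {1..d+1} \<Longrightarrow> j \<in> {1..d+1} \<Longrightarrow> x \<in> I i j \<Longrightarrow> y \<in> I i j \<Longrightarrow> x \<oplus> y \<in> I i j"
  by (rule additive_subgroup.a_closed[OF ideal.axioms(1)[OF ideal_I]])

lemma I_neg: "i \<in> {1..d+1} \<Longrightarrow> j \<in> {1..d+1} \<Longrightarrow> x \<in> I i j \<Longrightarrow> \<ominus> x \<in> I i j"
  by (rule additive_subgroup.a_inv_closed[OF ideal.axioms(1)[OF ideal_I]])

lemma I_antimono:
  assumes "i \<in> {1..d+1}" "j \<in> {1..d+1}" "k \<in> {1..d+1}" "j \<le> k"
  shows "I i k \<subseteq> I i j"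
proof
  fix x assume x: "x \<in> I i k"
  have "\<one> \<in> I k j" using I_full[of k j] assms by auto
  hence "x \<otimes> \<one> \<in> I i j" using I_mult_closed[of i k j x \<one>] assms x by auto
  thus "x \<in> I i j" using I_carrier[of i k x] assms x by simp
qed

definition admissible :: "(nat \<Rightarrow> nat \<Rightarrow> 'a) \<Rightarrow> bool" where
  "admissible f \<longleftrightarrow> (\<forall>i\<in>{1..d}. \<forall>j\<in>{1..d}. f i j \<in> I i j)"

lemma admissibleI: "(\<And>i j. i \<in> {1..d} \<Longrightarrow> j \<in> {1..d} \<Longrightarrow> f i j \<in> I i j) \<Longrightarrow> admissible f"
  unfolding admissible_def by blast

lemma admissibleD: "admissible f \<Longrightarrow> i \<in> {1..d} \<Longrightarrow> j \<in> {1..d} \<Longrightarrow> f i j \<in> I i j"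
  unfolding admissible_def by blast

lemma admissible_carrier: "admissible f \<Longrightarrow> i \<in> {1..d} \<Longrightarrow> j \<in> {1..d} \<Longrightarrow> f i j \<in> carrier R"
  by (rule I_carrier[OF _ _ admissibleD]) auto

lemma admissible_mat_carrier: "admissible f \<Longrightarrow> mat_carrier d f"
  using admissible_carrier by blast

lemma admissible_add: "admissible f \<Longrightarrow> admissible g \<Longrightarrow> admissible (\<lambda>i j. f i j \<oplus> g i j)"
proof (rule admissibleI)
  fix i j assume "admissible f" "admissible g" "i \<in> {1..d}" "j \<in> {1..d}"
  thus "f i j \<oplus> g i j \<in> I i j" using I_add[of i j] admissibleD by auto
qed

lemma admissible_neg: "admissible f \<Longrightarrow> admissible (\<lambda>i j. \<ominus> f i j)"
proof (rule admissibleI)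
  fix i j assume "admissible f" "i \<in> {1..d}" "j \<in> {1..d}"
  thus "\<ominus> f i j \<in> I i j" using I_neg[of i j] admissibleD by auto
qed

lemma admissible_zero: "admissible (\<lambda>i j. \<zero>)"
  by (rule admissibleI) (auto intro: I_zero)

lemma admissible_one: "admissible (\<lambda>i j. if i = j then \<one> else \<zero>)"
  by (rule admissibleI) (auto simp: I_full I_zero)

lemma admissible_mat_mult:
  assumes "admissible f" "admissible g" shows "admissible (mat_mult d f g)"
proof (rule admissibleI)
  fix i l assume il: "i \<in> {1..d}" "l \<in> {1..d}"
  have "f i j \<otimes> g j l \<in> I i l" if "j \<in> {1..d}" for j
    using I_mult_closed[of i j l] admissibleD assms il that by auto
  thus "mat_mult d f g i l \<in> I i l"
    unfolding mat_mult_def using il by (intro finsum_in_ideal[OF ideal_I]) auto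
qed

lemma tile_apply: "i \<in> {1..d} \<Longrightarrow> j \<in> {1..d} \<Longrightarrow> tile f i j = I i (d+1) +> f i j"
  unfolding tiled_of_def by simp

lemma tile_cong: "(\<And>i j. i \<in> {1..d} \<Longrightarrow> j \<in> {1..d} \<Longrightarrow> f i j = g i j) \<Longrightarrow> tile f = tile g"
  unfolding tiled_of_def by (intro ext) auto

lemma tile_eq_iff:
  assumes "mat_carrier d f" "mat_carrier d g"
  shows "tile f = tile g \<longleftrightarrow> (\<forall>i\<in>{1..d}. \<forall>j\<in>{1..d}. f i j \<ominus> g i j \<in> I i (d+1))"
proof -
  have "tile f = tile g \<longleftrightarrow> (\<forall>i\<in>{1..d}. \<forall>j\<in>{1..d}. I i (d+1) +> f i j = I i (d+1) +> g i j)"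
    unfolding tiled_of_def fun_eq_iff by auto
  thus ?thesis using rcos_eq_iff_minus[OF ideal_I] assms by auto
qed

lemma tile_in_carrier: "admissible f \<Longrightarrow> tile f \<in> carrier A"
  unfolding tiled_alg_def tiled_carrier_def tiled_of_def admissible_def by auto

lemma carrier_tiledE:
  assumes "M \<in> carrier A"
  obtains f where "M = tile f" "admissible f"
proof -
  have M: "\<forall>i\<in>{1..d}. \<forall>j\<in>{1..d}. \<exists>x\<in>I i j. M i j = I i (d + 1) +> x"
     "\<forall>i j. \<not> (i \<in> {1..d} \<and> j \<in> {1..d}) \<longrightarrow> M i j = {}"
    using assms unfolding tiled_alg_def tiled_carrier_def by auto
  then obtain f where f: "\<And>i j. i \<in> {1..d} \<Longrightarrow> j \<in> {1..d} \<Longrightarrow> f i j \<in> I i j \<and> M i j = I i (d+1) +> f i j"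
    by metis
  have "M = tile f" unfolding tiled_of_def using f M(2) by (intro ext) auto
  thus ?thesis using that f by (blast intro: admissibleI)
qed

lemma carrier_tiled_outside: "M \<in> carrier A \<Longrightarrow> \<not> (i \<in> {1..d} \<and> j \<in> {1..d}) \<Longrightarrow> M i j = {}"
  unfolding tiled_alg_def tiled_carrier_def by auto

lemma tiled_zero: "\<zero>\<^bsub>A\<^esub> = tile (\<lambda>i j. \<zero>)"
  unfolding tiled_alg_def tiled_diag_def tiled_of_def by simp

lemma tiled_one: "\<one>\<^bsub>A\<^esub> = tile (\<lambda>i j. if i = j then \<one> else \<zero>)"
  unfolding tiled_alg_def tiled_diag_def tiled_of_def by simp

lemma tiled_add:
  assumes "mat_carrier d f" "mat_carrier d g"
  shows "tile f \<oplus>\<^bsub>A\<^esub> tile g = tile (\<lambda>i j. f i j \<oplus> g i j)"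
  unfolding tiled_alg_def tiled_add_def tiled_of_def fun_eq_iff
  using ideal.a_rcos_sum[OF ideal_I] assms by auto

lemma coset_rep_tile:
  assumes "admissible f" "i \<in> {1..d}" "j \<in> {1..d}"
  shows "\<exists>u\<in>I i (d+1). coset_rep (tile f i j) = u \<oplus> f i j"
proof -
  have "ideal (I i (d+1)) R" using ideal_I assms(2) by auto
  then obtain u where "u \<in> I i (d+1)" "coset_rep (I i (d+1) +> f i j) = u \<oplus> f i j"
    by (metis coset_rep_rcos admissible_carrier assms)
  thus ?thesis using assms(2,3) by (auto simp: tile_apply)
qed

text \<open>Multiplication is computed on the chosen representatives; any other choice differs
  in the entry (i,l) by an element of I i (d+1), because I i j I j (d+1) \<subseteq> I i (d+1).\<close>

lemma coset_rep_mult_tile: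
  assumes f: "admissible f" and g: "admissible g" and ijl: "i \<in> {1..d}" "j \<in> {1..d}" "l \<in> {1..d}"
  shows "\<exists>c\<in>I i (d+1). coset_rep (tile f i j) \<otimes> coset_rep (tile g j l) = c \<oplus> f i j \<otimes> g j l"
proof -
  have fc: "f i j \<in> carrier R" and gc: "g j l \<in> carrier R"
    using admissible_carrier f g ijl by auto
  obtain u v where u: "u \<in> I i (d+1)" "coset_rep (tile f i j) = u \<oplus> f i j"
    and v: "v \<in> I j (d+1)" "coset_rep (tile g j l) = v \<oplus> g j l"
    using coset_rep_tile[OF f ijl(1,2)] coset_rep_tile[OF g ijl(2,3)] by blast
  have uc: "u \<in> carrier R" and vc: "v \<in> carrier R"
    using u(1) v(1) I_carrier[of i "d+1"] I_carrier[of j "d+1"] ijl by auto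
  have "u \<in> I i j" using u(1) I_antimono[of i j "d+1"] ijl by auto
  hence "u \<oplus> f i j \<in> I i j" using I_add[of i j] admissibleD[OF f] ijl by auto
  hence "(u \<oplus> f i j) \<otimes> v \<in> I i (d+1)" using I_mult_closed[of i j "d+1"] v(1) ijl by auto
  moreover have "u \<otimes> g j l \<in> I i (d+1)"
    using ideal.I_r_closed[OF ideal_I[of i "d+1"]] u(1) gc ijl by auto
  ultimately have "(u \<oplus> f i j) \<otimes> v \<oplus> u \<otimes> g j l \<in> I i (d+1)" using I_add[of i "d+1"] ijl by auto
  moreover have "coset_rep (tile f i j) \<otimes> coset_rep (tile g j l) = ((u \<oplus> f i j) \<otimes> v \<oplus> u \<otimes> g j l) \<oplus> f i j \<otimes> g j l"
    using u(2) v(2) uc vc fc gc by (simp add: r_distr l_distr a_assoc)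
  ultimately show ?thesis by blast
qed

lemma tiled_mult:
  assumes f: "admissible f" and g: "admissible g"
  shows "tile f \<otimes>\<^bsub>A\<^esub> tile g = tile (mat_mult d f g)"
proof -
  have "I i (d+1) +> (\<Oplus>j\<in>{1..d}. coset_rep (tile f i j) \<otimes> coset_rep (tile g j l))
      = I i (d+1) +> mat_mult d f g i l" if il: "i \<in> {1..d}" "l \<in> {1..d}" for i l
  proof -
    obtain c where c: "\<And>j. j \<in> {1..d} \<Longrightarrow> c j \<in> I i (d+1)"
      "\<And>j. j \<in> {1..d} \<Longrightarrow> coset_rep (tile f i j) \<otimes> coset_rep (tile g j l) = c j \<oplus> f i j \<otimes> g j l"
      using coset_rep_mult_tile[OF f g il(1) _ il(2)] by metis
    have cc: "\<And>j. j \<in> {1..d} \<Longrightarrow> c j \<in> carrier R" using c(1) I_carrier[of i "d+1"] il by auto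
    have "(\<Oplus>j\<in>{1..d}. coset_rep (tile f i j) \<otimes> coset_rep (tile g j l))
        = finsum R c {1..d} \<oplus> mat_mult d f g i l"
      unfolding mat_mult_def using c cc il admissible_carrier[OF f] admissible_carrier[OF g]
      by (subst finsum_addf[symmetric]) (auto intro!: finsum_cong' simp del: finsum_addf)
    moreover have "finsum R c {1..d} \<in> I i (d+1)" using c(1) il by (intro finsum_in_ideal[OF ideal_I]) auto
    moreover have "mat_mult d f g i l \<in> carrier R"
      using mat_mult_closed admissible_mat_carrier f g il by blast
    ultimately show ?thesis using rcos_add_ideal_elem[OF ideal_I] il by auto
  qed
  thus ?thesis unfolding tiled_alg_def tiled_mult_def tiled_of_def fun_eq_iff by auto
qed

lemma ring_tiled_alg: "ring A"
proof (rule ringI)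
  show "abelian_group A"
  proof (rule abelian_groupI)
    fix x y assume "x \<in> carrier A" "y \<in> carrier A"
    then obtain f g where "x = tile f" "admissible f" "y = tile g" "admissible g"
      by (metis carrier_tiledE)
    thus "x \<oplus>\<^bsub>A\<^esub> y \<in> carrier A"
      by (simp add: tiled_add admissible_mat_carrier tile_in_carrier admissible_add)
  next
    show "\<zero>\<^bsub>A\<^esub> \<in> carrier A" by (simp add: tiled_zero tile_in_carrier admissible_zero)
  next
    fix x y z assume "x \<in> carrier A" "y \<in> carrier A" "z \<in> carrier A"
    then obtain f g h where "x = tile f" "admissible f" "y = tile g" "admissible g" "z = tile h" "admissible h"
      by (metis carrier_tiledE)
    thus "x \<oplus>\<^bsub>A\<^esub> y \<oplus>\<^bsub>A\<^esub> z = x \<oplus>\<^bsub>A\<^esub> (y \<oplus>\<^bsub>A\<^esub> z)"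
      by (simp add: tiled_add admissible_mat_carrier admissible_add)
         (rule tile_cong, simp add: a_assoc admissible_carrier)
  next
    fix x y assume "x \<in> carrier A" "y \<in> carrier A"
    then obtain f g where "x = tile f" "admissible f" "y = tile g" "admissible g"
      by (metis carrier_tiledE)
    thus "x \<oplus>\<^bsub>A\<^esub> y = y \<oplus>\<^bsub>A\<^esub> x"
      by (simp add: tiled_add admissible_mat_carrier) (rule tile_cong, simp add: a_comm admissible_carrier)
  next
    fix x assume "x \<in> carrier A"
    then obtain f where "x = tile f" "admissible f" by (metis carrier_tiledE)
    thus "\<zero>\<^bsub>A\<^esub> \<oplus>\<^bsub>A\<^esub> x = x"
      by (simp add: tiled_zero tiled_add admissible_mat_carrier)
         (rule tile_cong, simp add: admissible_carrier)
  next
    fix x assume "x \<in> carrier A"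
    then obtain f where f: "x = tile f" "admissible f" by (metis carrier_tiledE)
    have "tile (\<lambda>i j. \<ominus> f i j) \<oplus>\<^bsub>A\<^esub> x = \<zero>\<^bsub>A\<^esub>"
      using f by (simp add: tiled_zero tiled_add admissible_mat_carrier)
        (rule tile_cong, simp add: admissible_carrier l_neg)
    thus "\<exists>y\<in>carrier A. y \<oplus>\<^bsub>A\<^esub> x = \<zero>\<^bsub>A\<^esub>" using f tile_in_carrier admissible_neg by blast
  qed
next
  show "monoid A"
  proof (rule monoidI)
    fix x y assume "x \<in> carrier A" "y \<in> carrier A"
    then obtain f g where "x = tile f" "admissible f" "y = tile g" "admissible g"
      by (metis carrier_tiledE)
    thus "x \<otimes>\<^bsub>A\<^esub> y \<in> carrier A" by (simp add: tiled_mult tile_in_carrier admissible_mat_mult)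
  next
    show "\<one>\<^bsub>A\<^esub> \<in> carrier A" by (simp add: tiled_one tile_in_carrier admissible_one)
  next
    fix x y z assume "x \<in> carrier A" "y \<in> carrier A" "z \<in> carrier A"
    then obtain f g h where "x = tile f" "admissible f" "y = tile g" "admissible g" "z = tile h" "admissible h"
      by (metis carrier_tiledE)
    thus "x \<otimes>\<^bsub>A\<^esub> y \<otimes>\<^bsub>A\<^esub> z = x \<otimes>\<^bsub>A\<^esub> (y \<otimes>\<^bsub>A\<^esub> z)"
      by (simp add: tiled_mult admissible_mat_mult)
         (rule tile_cong, simp add: mat_mult_assoc admissible_mat_carrier)
  next
    fix x assume "x \<in> carrier A"
    then obtain f where "x = tile f" "admissible f" by (metis carrier_tiledE)
    thus "\<one>\<^bsub>A\<^esub> \<otimes>\<^bsub>A\<^esub> x = x" "x \<otimes>\<^bsub>A\<^esub> \<one>\<^bsub>A\<^esub> = x"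
      by (simp_all add: tiled_one tiled_mult admissible_one)
         (rule tile_cong, simp add: mat_mult_l_one mat_mult_r_one admissible_mat_carrier)+
  qed
next
  fix x y z assume "x \<in> carrier A" "y \<in> carrier A" "z \<in> carrier A"
  then obtain f g h where "x = tile f" "admissible f" "y = tile g" "admissible g" "z = tile h" "admissible h"
    by (metis carrier_tiledE)
  thus "(x \<oplus>\<^bsub>A\<^esub> y) \<otimes>\<^bsub>A\<^esub> z = x \<otimes>\<^bsub>A\<^esub> z \<oplus>\<^bsub>A\<^esub> y \<otimes>\<^bsub>A\<^esub> z"
    "z \<otimes>\<^bsub>A\<^esub> (x \<oplus>\<^bsub>A\<^esub> y) = z \<otimes>\<^bsub>A\<^esub> x \<oplus>\<^bsub>A\<^esub> z \<otimes>\<^bsub>A\<^esub> y"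
    by (simp_all add: tiled_add tiled_mult admissible_mat_carrier admissible_add admissible_mat_mult)
       (rule tile_cong, simp add: mat_mult_l_distr mat_mult_r_distr admissible_mat_carrier)+
qed

lemma admissible_single_entry:
  "a \<in> {1..d} \<Longrightarrow> b \<in> {1..d} \<Longrightarrow> x \<in> I a b \<Longrightarrow> admissible (single_entry a b x)"
  unfolding single_entry_def by (rule admissibleI) (auto intro: I_zero)

lemma tiled_idem_eq: "tiled_idem R d I k = tile (single_entry k k \<one>)"
  unfolding tiled_idem_def tiled_diag_def tiled_of_def single_entry_def by simp

lemma tiled_mult_single_entry_right:
  assumes f: "admissible f" and bc: "b \<in> {1..d}" "c \<in> {1..d}" and y: "y \<in> I b c"
  shows "tile f \<otimes>\<^bsub>A\<^esub> tile (single_entry b c y) = tile (\<lambda>i l. if l = c then f i b \<otimes> y else \<zero>)"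
proof (rule trans[OF tiled_mult[OF f admissible_single_entry[OF bc y]]], rule tile_cong)
  fix i l assume il: "i \<in> {1..d}" "l \<in> {1..d}"
  have "y \<in> carrier R" using I_carrier[of b c] bc y by auto
  thus "mat_mult d f (single_entry b c y) i l = (if l = c then f i b \<otimes> y else \<zero>)"
    unfolding mat_mult_def using il bc admissible_carrier[OF f]
    by (subst finsum_eq_single[of _ b]) (auto simp: single_entry_def)
qed

lemma tiled_mult_single_entry_left:
  assumes g: "admissible g" and ab: "a \<in> {1..d}" "b \<in> {1..d}" and x: "x \<in> I a b"
  shows "tile (single_entry a b x) \<otimes>\<^bsub>A\<^esub> tile g = tile (\<lambda>i l. if i = a then x \<otimes> g b l else \<zero>)"
proof (rule trans[OF tiled_mult[OF admissible_single_entry[OF ab x] g]], rule tile_cong)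
  fix i l assume il: "i \<in> {1..d}" "l \<in> {1..d}"
  have "x \<in> carrier R" using I_carrier[of a b] ab x by auto
  thus "mat_mult d (single_entry a b x) g i l = (if i = a then x \<otimes> g b l else \<zero>)"
    unfolding mat_mult_def using il ab admissible_carrier[OF g]
    by (subst finsum_eq_single[of _ b]) (auto simp: single_entry_def)
qed

end

section \<open>Truncation to the upper left block\<close>

locale d_system_succ = d_system_ring +
  fixes n :: nat
  assumes d_Suc: "d = Suc n"
begin

sublocale S: d_system_ring R n I
  by unfold_locales (rule d_system_Suc_imp_d_system, use d_system d_Suc in simp)

abbreviation "e \<equiv> tiled_idem R d I d"

lemma d_in_range: "d \<in> {1..d}"
  using d_Suc by auto

lemma I_diag_d: "I d d = carrier R"
  using I_full[of d d] d_Suc by auto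

lemma one_in_I_row_d: "k \<in> {1..d} \<Longrightarrow> \<one> \<in> I d k"
  using I_full[of d k] d_Suc by auto

lemma e_eq: "e = tile (single_entry d d \<one>)"
  by (rule tiled_idem_eq)

lemma e_in_carrier: "e \<in> carrier A"
  unfolding e_eq by (intro tile_in_carrier admissible_single_entry) (use d_in_range I_diag_d in auto)

text \<open>A class modulo I i (d+1) determines a class modulo the larger ideal I i (n+1), which can
  be read off from any representative.\<close>

definition truncate :: "(nat \<Rightarrow> nat \<Rightarrow> 'a set) \<Rightarrow> (nat \<Rightarrow> nat \<Rightarrow> 'a set)" where
  "truncate M = tiled_of R n I (\<lambda>i j. coset_rep (M i j))"

lemma admissible_truncate: "admissible f \<Longrightarrow> S.admissible f"
  by (rule S.admissibleI) (rule admissibleD, auto simp: d_Suc)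

lemma truncate_tile:
  assumes f: "admissible f" shows "truncate (tile f) = S.tile f"
  unfolding truncate_def
proof (subst S.tile_eq_iff)
  show "\<forall>i\<in>{1..n}. \<forall>j\<in>{1..n}. coset_rep (tile f i j) \<ominus> f i j \<in> I i (n + 1)"
  proof (intro ballI)
    fix i j assume "i \<in> {1..n}" "j \<in> {1..n}"
    hence ij: "i \<in> {1..d}" "j \<in> {1..d}" using d_Suc by auto
    have fc: "f i j \<in> carrier R" using admissible_carrier[OF f ij] .
    obtain u where u: "u \<in> I i (d+1)" "coset_rep (tile f i j) = u \<oplus> f i j"
      using coset_rep_tile[OF f ij] by blast
    have uc: "u \<in> carrier R" using I_carrier[of i "d+1" u] u ij by auto
    have "u \<in> I i (n+1)" using I_antimono[of i "n+1" "d+1"] u ij d_Suc by auto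
    moreover have "coset_rep (tile f i j) \<ominus> f i j = u"
      using u uc fc by (simp add: minus_eq a_assoc r_neg)
    ultimately show "coset_rep (tile f i j) \<ominus> f i j \<in> I i (n + 1)" by simp
  qed
next
  show "mat_carrier n (\<lambda>i j. coset_rep (tile f i j))"
  proof (intro ballI)
    fix i j assume "i \<in> {1..n}" "j \<in> {1..n}"
    hence ij: "i \<in> {1..d}" "j \<in> {1..d}" using d_Suc by auto
    obtain u where "u \<in> I i (d+1)" "coset_rep (tile f i j) = u \<oplus> f i j"
      using coset_rep_tile[OF f ij] by blast
    thus "coset_rep (tile f i j) \<in> carrier R"
      using I_carrier[of i "d+1" u] admissible_carrier[OF f ij] ij by simp
  qed
next
  show "mat_carrier n f" using admissible_carrier[OF f] d_Suc by auto
qed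

lemma truncate_hom: "ring_hom_ring A S.A truncate"
proof (rule ring_hom_ringI[OF ring_tiled_alg S.ring_tiled_alg])
  fix x assume "x \<in> carrier A"
  then obtain f where "x = tile f" "admissible f" by (metis carrier_tiledE)
  thus "truncate x \<in> carrier S.A" by (simp add: truncate_tile S.tile_in_carrier admissible_truncate)
next
  fix x y assume "x \<in> carrier A" "y \<in> carrier A"
  then obtain f g where fg: "x = tile f" "admissible f" "y = tile g" "admissible g"
    by (metis carrier_tiledE)
  show "truncate (x \<oplus>\<^bsub>A\<^esub> y) = truncate x \<oplus>\<^bsub>S.A\<^esub> truncate y"
    using fg by (simp add: tiled_add S.tiled_add truncate_tile admissible_add admissible_mat_carrier
        S.admissible_mat_carrier admissible_truncate)
  have fg': "mat_carrier d f" "mat_carrier d g" using fg admissible_mat_carrier by auto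
  txt \<open>The products in A and in the truncated algebra differ by the terms through index d,
    which lie in I i d = I i (n+1).\<close>
  have "S.tile (mat_mult d f g) = S.tile (mat_mult n f g)"
  proof (subst S.tile_eq_iff, safe)
    fix i l assume "i \<in> {1..n}" "l \<in> {1..n}"
    hence il: "i \<in> {1..d}" "l \<in> {1..d}" using d_Suc by auto
    have "f i d \<otimes> g d l \<in> I i (n+1)"
      using ideal.I_r_closed[OF ideal_I[of i d]] admissibleD[OF fg(2) il(1) d_in_range]
        admissible_carrier[OF fg(4) d_in_range il(2)] il d_Suc by auto
    thus "mat_mult d f g i l \<ominus> mat_mult n f g i l \<in> I i (n + 1)"
      using mat_mult_Suc_minus[of n f g i l] fg' il d_Suc by simp
  qed (use fg' d_Suc mat_mult_closed in auto)
  thus "truncate (x \<otimes>\<^bsub>A\<^esub> y) = truncate x \<otimes>\<^bsub>S.A\<^esub> truncate y"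
    using fg by (simp add: tiled_mult S.tiled_mult truncate_tile admissible_mat_mult admissible_truncate)
next
  show "truncate \<one>\<^bsub>A\<^esub> = \<one>\<^bsub>S.A\<^esub>"
    by (simp add: tiled_one S.tiled_one truncate_tile admissible_one)
qed

lemma truncate_surj: "truncate ` carrier A = carrier S.A"
proof
  show "truncate ` carrier A \<subseteq> carrier S.A"
    using ring_hom_closed[OF ring_hom_ring.homh[OF truncate_hom]] by blast
next
  show "carrier S.A \<subseteq> truncate ` carrier A"
  proof
    fix N assume "N \<in> carrier S.A"
    then obtain f where f: "N = S.tile f" "S.admissible f" by (metis S.carrier_tiledE)
    define f' where "f' = (\<lambda>i j. if i \<le> n \<and> j \<le> n then f i j else \<zero>)"
    have f': "admissible f'"
      by (rule admissibleI) (use S.admissibleD[OF f(2)] I_zero in \<open>auto simp: f'_def\<close>)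
    have "truncate (tile f') = N" unfolding truncate_tile[OF f'] f(1) by (rule S.tile_cong) (simp add: f'_def)
    thus "N \<in> truncate ` carrier A" using tile_in_carrier[OF f'] by blast
  qed
qed

section \<open>The ideal generated by e_d\<close>

definition AeA :: "(nat \<Rightarrow> nat \<Rightarrow> 'a set) set" where
  "AeA = tile ` {f. \<forall>i\<in>{1..d}. \<forall>j\<in>{1..d}. f i j \<in> I i d}"

definition Ae :: "(nat \<Rightarrow> nat \<Rightarrow> 'a set) set" where
  "Ae = {a \<otimes>\<^bsub>A\<^esub> e | a. a \<in> carrier A}"

definition column_d :: "(nat \<Rightarrow> 'a) \<Rightarrow> nat \<Rightarrow> nat \<Rightarrow> 'a" where
  "column_d g = (\<lambda>i l. if l = d then g i else \<zero>)"

lemma admissible_if_in_I_d: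
  assumes "\<And>i j. i \<in> {1..d} \<Longrightarrow> j \<in> {1..d} \<Longrightarrow> f i j \<in> I i d"
  shows "admissible f"
proof (rule admissibleI)
  fix i j assume ij: "i \<in> {1..d}" "j \<in> {1..d}"
  show "f i j \<in> I i j" using assms[OF ij] I_antimono[of i j d] ij by auto
qed

lemma AeAE:
  assumes "x \<in> AeA"
  obtains f where "x = tile f" "admissible f" "\<forall>i\<in>{1..d}. \<forall>j\<in>{1..d}. f i j \<in> I i d"
proof -
  obtain f where "x = tile f" "\<forall>i\<in>{1..d}. \<forall>j\<in>{1..d}. f i j \<in> I i d"
    using assms unfolding AeA_def by blast
  thus ?thesis using that admissible_if_in_I_d by blast
qed

lemma AeA_subset_carrier: "AeA \<subseteq> carrier A"
proof
  fix x assume "x \<in> AeA"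
  then obtain f where "x = tile f" "admissible f" by (rule AeAE)
  thus "x \<in> carrier A" by (simp add: tile_in_carrier)
qed

text \<open>Row d and column d are automatically in the right ideals (I d j = R, I i d \<supseteq> I i j
  for j \<le> d), so membership in AeA is decided on the upper-left block.\<close>

lemma in_I_d_iff_block:
  assumes "admissible f"
  shows "(\<forall>i\<in>{1..d}. \<forall>j\<in>{1..d}. f i j \<in> I i d) \<longleftrightarrow> (\<forall>i\<in>{1..n}. \<forall>j\<in>{1..n}. f i j \<in> I i d)"
proof
  assume "\<forall>i\<in>{1..d}. \<forall>j\<in>{1..d}. f i j \<in> I i d"
  thus "\<forall>i\<in>{1..n}. \<forall>j\<in>{1..n}. f i j \<in> I i d" using d_Suc by auto
next
  assume block: "\<forall>i\<in>{1..n}. \<forall>j\<in>{1..n}. f i j \<in> I i d"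
  show "\<forall>i\<in>{1..d}. \<forall>j\<in>{1..d}. f i j \<in> I i d"
  proof (intro ballI)
    fix i j assume ij: "i \<in> {1..d}" "j \<in> {1..d}"
    consider "i = d" | "j = d" | "i \<in> {1..n}" "j \<in> {1..n}" using ij d_Suc by fastforce
    thus "f i j \<in> I i d"
      using admissible_carrier[OF assms ij] admissibleD[OF assms ij] I_diag_d block by cases auto
  qed
qed

lemma kernel_truncate: "a_kernel A S.A truncate = AeA"
proof -
  have key: "truncate (tile f) = \<zero>\<^bsub>S.A\<^esub> \<longleftrightarrow> (\<forall>i\<in>{1..d}. \<forall>j\<in>{1..d}. f i j \<in> I i d)"
    if f: "admissible f" for f
  proof -
    have fc: "mat_carrier n f" using admissible_carrier[OF f] d_Suc by auto
    have "truncate (tile f) = \<zero>\<^bsub>S.A\<^esub> \<longleftrightarrow> (\<forall>i\<in>{1..n}. \<forall>j\<in>{1..n}. f i j \<ominus> \<zero> \<in> I i (n+1))"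
      unfolding truncate_tile[OF f] S.tiled_zero using fc by (subst S.tile_eq_iff) auto
    also have "\<dots> \<longleftrightarrow> (\<forall>i\<in>{1..n}. \<forall>j\<in>{1..n}. f i j \<in> I i d)"
      using fc d_Suc by (simp add: minus_eq)
    finally show ?thesis using in_I_d_iff_block[OF f] by simp
  qed
  show ?thesis
  proof (intro equalityI subsetI)
    fix x assume "x \<in> a_kernel A S.A truncate"
    hence x: "x \<in> carrier A" "truncate x = \<zero>\<^bsub>S.A\<^esub>" unfolding a_kernel_def' by auto
    then obtain f where "x = tile f" "admissible f" by (metis carrier_tiledE)
    thus "x \<in> AeA" using key x(2) unfolding AeA_def by blast
  next
    fix x assume "x \<in> AeA"
    then obtain f where "x = tile f" "admissible f" "\<forall>i\<in>{1..d}. \<forall>j\<in>{1..d}. f i j \<in> I i d"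
      by (rule AeAE)
    thus "x \<in> a_kernel A S.A truncate" unfolding a_kernel_def' using key tile_in_carrier by auto
  qed
qed

lemma ideal_AeA: "ideal AeA A"
  using ring_hom_ring.kernel_is_ideal[OF truncate_hom] kernel_truncate by simp

lemma e_in_AeA: "e \<in> AeA"
proof -
  have "single_entry d d \<one> i j \<in> I i d" if "i \<in> {1..d}" "j \<in> {1..d}" for i j
    using I_diag_d I_zero[of i d] that d_Suc by (auto simp: single_entry_def)
  thus ?thesis unfolding e_eq AeA_def by blast
qed

lemma admissible_column_d: "(\<And>i. i \<in> {1..d} \<Longrightarrow> g i \<in> I i d) \<Longrightarrow> admissible (column_d g)"
proof (rule admissible_if_in_I_d)
  fix i j assume "\<And>i. i \<in> {1..d} \<Longrightarrow> g i \<in> I i d" "i \<in> {1..d}" "j \<in> {1..d}"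
  thus "column_d g i j \<in> I i d" using I_zero[of i d] by (auto simp: column_d_def)
qed

lemma Ae_iff: "M \<in> Ae \<longleftrightarrow> (\<exists>g. (\<forall>i\<in>{1..d}. g i \<in> I i d) \<and> M = tile (column_d g))"
proof
  assume "M \<in> Ae"
  then obtain a where a: "M = a \<otimes>\<^bsub>A\<^esub> e" "a \<in> carrier A" unfolding Ae_def by blast
  obtain f where f: "a = tile f" "admissible f" using a(2) by (rule carrier_tiledE)
  have "M = tile (column_d (\<lambda>i. f i d))"
    unfolding a(1) f(1) e_eq tiled_mult_single_entry_right[OF f(2) d_in_range d_in_range one_in_I_row_d[OF d_in_range]]
    by (rule tile_cong) (simp add: column_d_def admissible_carrier[OF f(2)] d_in_range)
  thus "\<exists>g. (\<forall>i\<in>{1..d}. g i \<in> I i d) \<and> M = tile (column_d g)"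
    using admissibleD[OF f(2) _ d_in_range] by (intro exI[of _ "\<lambda>i. f i d"]) auto
next
  assume "\<exists>g. (\<forall>i\<in>{1..d}. g i \<in> I i d) \<and> M = tile (column_d g)"
  then obtain g where g: "\<And>i. i \<in> {1..d} \<Longrightarrow> g i \<in> I i d" "M = tile (column_d g)" by blast
  have col: "admissible (column_d g)" using g(1) by (rule admissible_column_d)
  have "tile (column_d g) \<otimes>\<^bsub>A\<^esub> e = M"
    unfolding g(2) e_eq tiled_mult_single_entry_right[OF col d_in_range d_in_range one_in_I_row_d[OF d_in_range]]
    by (rule tile_cong) (use admissible_carrier[OF col, of _ d] d_in_range in \<open>auto simp: column_d_def\<close>)
  thus "M \<in> Ae" unfolding Ae_def using tile_in_carrier[OF col] by blast
qed

lemma ideal_genideal_e: "ideal (genideal A {e}) A"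
  using ring.genideal_ideal[OF ring_tiled_alg] e_in_carrier by simp

lemma Ae_subset_genideal: "Ae \<subseteq> genideal A {e}"
  unfolding Ae_def
  using ideal.I_l_closed[OF ideal_genideal_e ring.genideal_self'[OF ring_tiled_alg e_in_carrier]]
  by blast

lemma column_in_genideal:
  assumes g: "\<And>i. i \<in> {1..d} \<Longrightarrow> g i \<in> I i d" and k: "k \<in> {1..d}"
  shows "tile (\<lambda>i l. if l = k then g i else \<zero>) \<in> genideal A {e}"
proof -
  have col: "admissible (column_d g)" using g by (rule admissible_column_d)
  have "tile (column_d g) \<in> genideal A {e}"
    using Ae_subset_genideal Ae_iff g by blast
  moreover have "tile (single_entry d k \<one>) \<in> carrier A"
    by (intro tile_in_carrier admissible_single_entry d_in_range k one_in_I_row_d)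
  moreover have "tile (column_d g) \<otimes>\<^bsub>A\<^esub> tile (single_entry d k \<one>) = tile (\<lambda>i l. if l = k then g i else \<zero>)"
    unfolding tiled_mult_single_entry_right[OF col d_in_range k one_in_I_row_d[OF k]]
    by (rule tile_cong) (use admissible_carrier[OF col, of _ d] d_in_range in \<open>auto simp: column_d_def\<close>)
  ultimately show ?thesis using ideal.I_r_closed[OF ideal_genideal_e] by metis
qed

text \<open>A matrix with entries in I i d is the sum of its columns, and each column lies in A e A.\<close>

lemma genideal_e_eq: "genideal A {e} = AeA"
proof
  show "genideal A {e} \<subseteq> AeA"
    using ring.genideal_minimal[OF ring_tiled_alg ideal_AeA] e_in_AeA by blast
next
  show "AeA \<subseteq> genideal A {e}"
  proof
    fix x assume "x \<in> AeA"
    then obtain f where f: "x = tile f" "admissible f" "\<forall>i\<in>{1..d}. \<forall>j\<in>{1..d}. f i j \<in> I i d"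
      by (rule AeAE)
    have fc: "\<And>i j. i \<in> {1..d} \<Longrightarrow> j \<in> {1..d} \<Longrightarrow> f i j \<in> carrier R" using admissible_carrier[OF f(2)] .
    have "tile (\<lambda>i j. if j \<le> k then f i j else \<zero>) \<in> genideal A {e}" for k
    proof (induction k)
      case 0
      have "tile (\<lambda>i j. if j \<le> 0 then f i j else \<zero>) = \<zero>\<^bsub>A\<^esub>"
        unfolding tiled_zero by (rule tile_cong) auto
      thus ?case using additive_subgroup.zero_closed[OF ideal.axioms(1)[OF ideal_genideal_e]] by simp
    next
      case (Suc k)
      show ?case
      proof (cases "Suc k \<le> d")
        case True
        have "tile (\<lambda>i j. if j \<le> Suc k then f i j else \<zero>)
            = tile (\<lambda>i j. if j \<le> k then f i j else \<zero>) \<oplus>\<^bsub>A\<^esub> tile (\<lambda>i j. if j = Suc k then f i (Suc k) else \<zero>)"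
          using fc True by (subst tiled_add) (auto intro!: tile_cong)
        moreover have "tile (\<lambda>i j. if j = Suc k then f i (Suc k) else \<zero>) \<in> genideal A {e}"
          using True f(3) by (intro column_in_genideal) auto
        ultimately show ?thesis
          using Suc.IH additive_subgroup.a_closed[OF ideal.axioms(1)[OF ideal_genideal_e]] by simp
      next
        case False
        have "tile (\<lambda>i j. if j \<le> Suc k then f i j else \<zero>) = tile (\<lambda>i j. if j \<le> k then f i j else \<zero>)"
          using False by (intro tile_cong) auto
        thus ?thesis using Suc.IH by simp
      qed
    qed
    moreover have "tile (\<lambda>i j. if j \<le> d then f i j else \<zero>) = x"
      unfolding f(1) by (rule tile_cong) auto
    ultimately show "x \<in> genideal A {e}" by metis
  qed
qed

definition columns :: "(nat \<Rightarrow> nat \<Rightarrow> 'a set) \<Rightarrow> nat \<Rightarrow> nat \<Rightarrow> nat \<Rightarrow> 'a set" where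
  "columns M = (\<lambda>k\<in>{1..d}. \<lambda>i l. if i \<in> {1..d} \<and> l \<in> {1..d}
      then (if l = d then M i k else I i (d+1) +> \<zero>) else {})"

lemma columns_tile: "k \<in> {1..d} \<Longrightarrow> columns (tile f) k = tile (column_d (\<lambda>i. f i k))"
  unfolding columns_def tiled_of_def column_d_def by (intro ext) auto

lemma inj_on_columns: "inj_on columns (carrier A)"
proof (rule inj_onI)
  fix x y assume xy: "x \<in> carrier A" "y \<in> carrier A" "columns x = columns y"
  show "x = y"
  proof (intro ext)
    fix i k show "x i k = y i k"
    proof (cases "i \<in> {1..d} \<and> k \<in> {1..d}")
      case True
      hence "columns x k i d = x i k" "columns y k i d = y i k"
        unfolding columns_def using d_in_range by auto
      thus ?thesis using xy(3) by simp
    next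
      case False
      thus ?thesis using carrier_tiled_outside[OF xy(1) False] carrier_tiled_outside[OF xy(2) False] by simp
    qed
  qed
qed

lemma columns_image: "columns ` AeA = dsum_power_carrier Ae d"
proof
  show "columns ` AeA \<subseteq> dsum_power_carrier Ae d"
  proof
    fix z assume "z \<in> columns ` AeA"
    then obtain x where x: "x \<in> AeA" "z = columns x" by blast
    obtain f where f: "x = tile f" "admissible f" "\<forall>i\<in>{1..d}. \<forall>j\<in>{1..d}. f i j \<in> I i d"
      using x(1) by (rule AeAE)
    have "columns (tile f) k \<in> Ae" if "k \<in> {1..d}" for k
      unfolding columns_tile[OF that] Ae_iff using f(3) that by (intro exI[of _ "\<lambda>i. f i k"]) auto
    moreover have "columns (tile f) k = undefined" if "k \<notin> {1..d}" for k
      using that unfolding columns_def by auto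
    ultimately show "z \<in> dsum_power_carrier Ae d"
      unfolding dsum_power_carrier_def x(2) f(1) by (intro PiE_I)
  qed
next
  show "dsum_power_carrier Ae d \<subseteq> columns ` AeA"
  proof
    fix z assume z: "z \<in> dsum_power_carrier Ae d"
    have "\<forall>k\<in>{1..d}. \<exists>g. (\<forall>i\<in>{1..d}. g i \<in> I i d) \<and> z k = tile (column_d g)"
      using z Ae_iff unfolding dsum_power_carrier_def by auto
    from bchoice[OF this] obtain G
      where G: "\<forall>k\<in>{1..d}. (\<forall>i\<in>{1..d}. G k i \<in> I i d) \<and> z k = tile (column_d (G k))"
      by blast
    define f where "f = (\<lambda>i k. G k i)"
    have "tile f \<in> AeA" unfolding AeA_def f_def by (rule imageI) (use G in simp)
    moreover have "columns (tile f) = z"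
    proof (rule ext)
      fix k show "columns (tile f) k = z k"
        using z G columns_tile[of k f]
        unfolding dsum_power_carrier_def columns_def f_def by (cases "k \<in> {1..d}") auto
    qed
    ultimately show "z \<in> columns ` AeA" by blast
  qed
qed

lemma columns_add:
  assumes "x \<in> carrier A" "y \<in> carrier A"
  shows "columns (x \<oplus>\<^bsub>A\<^esub> y) = (\<lambda>k\<in>{1..d}. columns x k \<oplus>\<^bsub>A\<^esub> columns y k)"
proof -
  obtain f g where fg: "x = tile f" "admissible f" "y = tile g" "admissible g"
    using assms by (metis carrier_tiledE)
  have "columns (tile f \<oplus>\<^bsub>A\<^esub> tile g) k = columns (tile f) k \<oplus>\<^bsub>A\<^esub> columns (tile g) k"
    if k: "k \<in> {1..d}" for k
    using admissible_carrier[OF fg(2)] admissible_carrier[OF fg(4)] k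
    by (simp add: tiled_add admissible_mat_carrier fg columns_tile column_d_def)
       (rule tile_cong, auto)
  thus ?thesis unfolding fg(1,3) by (auto simp: columns_def)
qed

lemma columns_mult:
  assumes "a \<in> carrier A" "x \<in> AeA"
  shows "columns (a \<otimes>\<^bsub>A\<^esub> x) = (\<lambda>k\<in>{1..d}. a \<otimes>\<^bsub>A\<^esub> columns x k)"
proof -
  obtain h where h: "a = tile h" "admissible h" using assms(1) by (rule carrier_tiledE)
  obtain f where f: "x = tile f" "admissible f" "\<forall>i\<in>{1..d}. \<forall>j\<in>{1..d}. f i j \<in> I i d"
    using assms(2) by (rule AeAE)
  have "columns (tile h \<otimes>\<^bsub>A\<^esub> tile f) k = tile h \<otimes>\<^bsub>A\<^esub> columns (tile f) k"
    if k: "k \<in> {1..d}" for k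
  proof -
    have col: "admissible (column_d (\<lambda>i. f i k))" by (intro admissible_column_d) (use f(3) k in auto)
    have "mat_mult d h (column_d (\<lambda>i. f i k)) i l = column_d (\<lambda>i. mat_mult d h f i k) i l"
      if il: "i \<in> {1..d}" "l \<in> {1..d}" for i l
    proof (cases "l = d")
      case True
      thus ?thesis unfolding mat_mult_def column_d_def by simp
    next
      case False
      have "mat_mult d h (column_d (\<lambda>i. f i k)) i l = (\<Oplus>j\<in>{1..d}. \<zero>)"
        unfolding mat_mult_def using False admissible_carrier[OF h(2)] il
        by (intro finsum_cong') (auto simp: column_d_def)
      thus ?thesis using False unfolding column_d_def by (simp add: finsum_zero)
    qed
    thus ?thesis
      unfolding columns_tile[OF k] tiled_mult[OF h(2) f(2)] tiled_mult[OF h(2) col] columns_tile[OF k]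
      by (intro tile_cong) simp
  qed
  thus ?thesis unfolding h(1) f(1) by (auto simp: columns_def)
qed

lemma AeA_iso_columns:
  "left_module_iso A AeA (add A) (mult A) (dsum_power_carrier Ae d)
     (\<lambda>x y. \<lambda>k\<in>{1..d}. x k \<oplus>\<^bsub>A\<^esub> y k) (\<lambda>a x. \<lambda>k\<in>{1..d}. a \<otimes>\<^bsub>A\<^esub> x k) columns"
  unfolding left_module_iso_def bij_betw_def
  using inj_on_subset[OF inj_on_columns AeA_subset_carrier] columns_image columns_mult
    columns_add AeA_subset_carrier by blast

section \<open>The corner ring e_d A e_d\<close>

lemma corner_sandwich:
  assumes f: "admissible f"
  shows "e \<otimes>\<^bsub>A\<^esub> tile f \<otimes>\<^bsub>A\<^esub> e = tile (single_entry d d (f d d))"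
proof -
  have one: "\<one> \<in> I d d" using one_in_I_row_d[OF d_in_range] .
  define g where "g = (\<lambda>i l. if i = d then f d l else \<zero>)"
  have g: "admissible g"
  proof (rule admissibleI)
    fix i l assume il: "i \<in> {1..d}" "l \<in> {1..d}"
    show "g i l \<in> I i l"
    proof (cases "i = d")
      case True thus ?thesis using admissibleD[OF f d_in_range il(2)] by (simp add: g_def)
    next
      case False thus ?thesis using I_zero[of i l] il by (simp add: g_def)
    qed
  qed
  have "e \<otimes>\<^bsub>A\<^esub> tile f = tile (\<lambda>i l. if i = d then \<one> \<otimes> f d l else \<zero>)"
    using tiled_mult_single_entry_left[OF f d_in_range d_in_range one] by (simp only: e_eq)
  also have "\<dots> = tile g"
    by (rule tile_cong) (simp add: g_def admissible_carrier[OF f d_in_range])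
  finally have left: "e \<otimes>\<^bsub>A\<^esub> tile f = tile g" .
  have "tile g \<otimes>\<^bsub>A\<^esub> e = tile (\<lambda>i l. if l = d then g i d \<otimes> \<one> else \<zero>)"
    using tiled_mult_single_entry_right[OF g d_in_range d_in_range one] by (simp only: e_eq)
  also have "\<dots> = tile (single_entry d d (f d d))"
    by (rule tile_cong) (simp add: g_def single_entry_def admissible_carrier[OF f d_in_range d_in_range])
  finally show ?thesis using left by simp
qed

lemma corner_carrier_iff:
  "C \<in> carrier (corner_ring A e) \<longleftrightarrow> (\<exists>x\<in>carrier R. C = tile (single_entry d d x))"
proof
  assume "C \<in> carrier (corner_ring A e)"
  then obtain a where a: "C = e \<otimes>\<^bsub>A\<^esub> a \<otimes>\<^bsub>A\<^esub> e" "a \<in> carrier A" unfolding corner_ring_def by auto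
  obtain f where f: "a = tile f" "admissible f" using a(2) by (rule carrier_tiledE)
  show "\<exists>x\<in>carrier R. C = tile (single_entry d d x)"
    using a(1) corner_sandwich[OF f(2)] admissible_carrier[OF f(2) d_in_range d_in_range] f(1) by blast
next
  assume "\<exists>x\<in>carrier R. C = tile (single_entry d d x)"
  then obtain x where x: "x \<in> carrier R" "C = tile (single_entry d d x)" by blast
  have ok: "admissible (single_entry d d x)"
    using admissible_single_entry[OF d_in_range d_in_range] x I_diag_d by simp
  have "e \<otimes>\<^bsub>A\<^esub> tile (single_entry d d x) \<otimes>\<^bsub>A\<^esub> e = C"
    unfolding corner_sandwich[OF ok] x(2) by (simp add: single_entry_def)
  thus "C \<in> carrier (corner_ring A e)" unfolding corner_ring_def using tile_in_carrier[OF ok] by auto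
qed

lemma single_entry_d_apply: "tile (single_entry d d x) d d = I d (d+1) +> x"
  by (simp add: tile_apply[OF d_in_range d_in_range] single_entry_def)

lemma single_entry_d_mult:
  assumes "x \<in> carrier R" "y \<in> carrier R"
  shows "tile (single_entry d d x) \<otimes>\<^bsub>A\<^esub> tile (single_entry d d y) = tile (single_entry d d (x \<otimes> y))"
proof -
  have x: "admissible (single_entry d d x)" and y: "y \<in> I d d"
    using admissible_single_entry[OF d_in_range d_in_range] assms I_diag_d by simp_all
  show ?thesis
    unfolding tiled_mult_single_entry_right[OF x d_in_range d_in_range y]
    by (rule tile_cong) (simp add: single_entry_def assms)
qed

lemma corner_entry_image:
  "(\<lambda>C. C d d) ` carrier (corner_ring A e) = carrier (R Quot (I d (d+1)))"
proof -
  have quot: "carrier (R Quot (I d (d+1))) = (\<lambda>x. I d (d+1) +> x) ` carrier R"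
    unfolding FactRing_def A_RCOSETS_def' by auto
  have "(\<lambda>C. C d d) ` carrier (corner_ring A e) = (\<lambda>x. tile (single_entry d d x) d d) ` carrier R"
    using corner_carrier_iff by force
  thus ?thesis unfolding quot single_entry_d_apply .
qed

lemma inj_on_corner_entry: "inj_on (\<lambda>C. C d d) (carrier (corner_ring A e))"
proof (rule inj_onI)
  fix C D assume "C \<in> carrier (corner_ring A e)" "D \<in> carrier (corner_ring A e)" "C d d = D d d"
  then obtain x y where "C = tile (single_entry d d x)" "D = tile (single_entry d d y)"
    "I d (d+1) +> x = I d (d+1) +> y"
    unfolding corner_carrier_iff by (metis single_entry_d_apply)
  thus "C = D" unfolding tiled_of_def single_entry_def by (intro ext) auto
qed

lemma corner_iso: "corner_ring A e \<simeq> R Quot (I d (d+1))"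
proof -
  let ?J = "I d (d+1)"
  have J: "ideal ?J R" using ideal_I[of d "d+1"] d_Suc by auto
  have "(\<lambda>C. C d d) \<in> ring_iso (corner_ring A e) (R Quot ?J)"
  proof (rule ring_iso_memI)
    fix C assume "C \<in> carrier (corner_ring A e)"
    thus "C d d \<in> carrier (R Quot ?J)" using corner_entry_image by blast
  next
    fix C D assume "C \<in> carrier (corner_ring A e)" "D \<in> carrier (corner_ring A e)"
    then obtain x y where xy: "x \<in> carrier R" "C = tile (single_entry d d x)"
      "y \<in> carrier R" "D = tile (single_entry d d y)"
      unfolding corner_carrier_iff by blast
    show "(C \<otimes>\<^bsub>corner_ring A e\<^esub> D) d d = C d d \<otimes>\<^bsub>R Quot ?J\<^esub> D d d"
      unfolding corner_ring_def FactRing_def using xy ideal.rcoset_mult_add[OF J xy(1) xy(3)]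
      by (simp add: single_entry_d_mult single_entry_d_apply)
  next
    fix C D show "(C \<oplus>\<^bsub>corner_ring A e\<^esub> D) d d = C d d \<oplus>\<^bsub>R Quot ?J\<^esub> D d d"
      unfolding corner_ring_def FactRing_def tiled_alg_def tiled_add_def using d_in_range by simp
  next
    show "\<one>\<^bsub>corner_ring A e\<^esub> d d = \<one>\<^bsub>R Quot ?J\<^esub>"
      unfolding corner_ring_def FactRing_def tiled_idem_def tiled_diag_def using d_in_range by simp
  next
    show "bij_betw (\<lambda>C. C d d) (carrier (corner_ring A e)) (carrier (R Quot ?J))"
      using inj_on_corner_entry corner_entry_image unfolding bij_betw_def by blast
  qed
  thus ?thesis unfolding is_ring_iso_def by blast
qed

lemma quotient_iso: "A Quot (genideal A {e}) \<simeq> S.A"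
  unfolding genideal_e_eq kernel_truncate[symmetric]
  using ring_hom_ring.FactRing_iso[OF truncate_hom truncate_surj] .

end

theorem proposition3p7:
  fixes R :: "('a, 'b) ring_scheme" and d :: nat and I :: "nat \<Rightarrow> nat \<Rightarrow> 'a set"
  assumes "ring R" and "d \<ge> 1" and "d_system R d I"
  defines "A \<equiv> tiled_alg R d I"
  defines "e \<equiv> tiled_idem R d I"
  shows
   "(\<exists>f. left_module_iso A
          (genideal A {e d}) (add A) (mult A)
          (dsum_power_carrier {a \<otimes>\<^bsub>A\<^esub> e d | a. a \<in> carrier A} d)
          (\<lambda>x y. \<lambda>k\<in>{1..d}. x k \<oplus>\<^bsub>A\<^esub> y k)
          (\<lambda>a x. \<lambda>k\<in>{1..d}. a \<otimes>\<^bsub>A\<^esub> x k) f)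
    \<and> corner_ring A (e d) \<simeq> R Quot (I d (d+1))
    \<and> (d \<ge> 2 \<longrightarrow> d_system R (d - 1) I \<and> A Quot (genideal A {e d}) \<simeq> tiled_alg R (d - 1) I)"
proof -
  obtain n where n: "d = Suc n" using assms(2) by (cases d) auto
  interpret d_system_succ R d I n
    by (intro d_system_succ.intro d_system_ring.intro d_system_succ_axioms.intro
        d_system_ring_axioms.intro) (use assms n in auto)
  show ?thesis
    unfolding A_def e_def
    using AeA_iso_columns corner_iso quotient_iso S.d_system n
    unfolding genideal_e_eq[symmetric] Ae_def by auto
qed

end
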